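(* Let $d\ge3$, $h\ge1$, $1\le n\le h$, and let $j$ be a vertex at distance $n$ from the root. Then the order of the image of $\bar{\mathbf{x}}_j$ in the quotient group $G(d,h)/G_{n-1}(d,h)$ is $\theta(d,h+2-n)$, where $\theta(d,m):=\frac{(d-1)^m-1}{d-2}$.
   Context: Let $\mathcal{T}(d,h)$ be the rooted tree in which the root $0$ has $d$ children, every vertex at distance $1,\dots,h-1$ from the root has $d-1$ children, and the vertices at distance $h$ are leaves. Let $V$ be its vertex set, $A$ its adjacency matrix, $\Delta := dI-A$, and $\Lambda\subset\mathbb{Z}^V$ the lattice spanned by the rows of $\Delta$. Then $G(d,h):=\mathbb{Z}^V/\Lambda$; $\{\mathbf{x}_i:i\in V\}$ is the standard basis of $\mathbb{Z}^V$ and $\bar{\mathbf{v}}$ denotes the image of $\mathbf{v}$ in $G(d,h)$. For $0\le m\le h$, $G_m(d,h)$ is the subgroup of $G(d,h)$ generated by $\{\bar{\mathbf{x}}_i : i \text{ at distance}\le m\text{ from the root}\}$. *)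

theory Defs
  imports "HOL-Algebra.Algebra"
begin

text \<open>Vertices of T(d,h): lists c of length at most h (the path of child
indices from the root); the root is the empty list, the first index is < d,
all later indices are < d-1. The distance of a vertex from the root is its length.\<close>

definition tree_verts :: "nat \<Rightarrow> nat \<Rightarrow> nat list set" where
  "tree_verts d h = {v. length v \<le> h \<and>
      (\<forall>k<length v. v ! k < (if k = 0 then d else d - 1))}"

definition tree_adj :: "nat \<Rightarrow> nat \<Rightarrow> nat list \<Rightarrow> nat list \<Rightarrow> bool" where
  "tree_adj d h u v \<longleftrightarrow> u \<in> tree_verts d h \<and> v \<in> tree_verts d h \<and>
     ((u \<noteq> [] \<and> v = butlast u) \<or> (v \<noteq> [] \<and> u = butlast v))"

definition adjmat :: "nat \<Rightarrow> nat \<Rightarrow> nat list \<Rightarrow> nat list \<Rightarrow> int" where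
  "adjmat d h u v = (if tree_adj d h u v then 1 else 0)"

text \<open>The free abelian group Z^V (finitely many coordinates, functions vanishing off V),
as an (additively meant) HOL-Algebra monoid.\<close>
definition ZV :: "nat \<Rightarrow> nat \<Rightarrow> (nat list \<Rightarrow> int) monoid" where
  "ZV d h = \<lparr>carrier = {f. \<forall>k. k \<notin> tree_verts d h \<longrightarrow> f k = 0},
            monoid.mult = (\<lambda>f g k. f k + g k), monoid.one = (\<lambda>k. 0)\<rparr>"

definition basisvec :: "nat list \<Rightarrow> nat list \<Rightarrow> int" where
  "basisvec i = (\<lambda>k. if k = i then 1 else 0)"

definition delta_row :: "nat \<Rightarrow> nat \<Rightarrow> nat list \<Rightarrow> nat list \<Rightarrow> int" where
  "delta_row d h i = (\<lambda>k. if k \<in> tree_verts d h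
       then (if k = i then int d else 0) - adjmat d h i k else 0)"

definition Lam :: "nat \<Rightarrow> nat \<Rightarrow> (nat list \<Rightarrow> int) set" where
  "Lam d h = generate (ZV d h) (delta_row d h ` tree_verts d h)"

definition Gdh :: "nat \<Rightarrow> nat \<Rightarrow> (nat list \<Rightarrow> int) set monoid" where
  "Gdh d h = ZV d h Mod Lam d h"

definition bar :: "nat \<Rightarrow> nat \<Rightarrow> (nat list \<Rightarrow> int) \<Rightarrow> (nat list \<Rightarrow> int) set" where
  "bar d h v = Lam d h #>\<^bsub>ZV d h\<^esub> v"

definition Gm :: "nat \<Rightarrow> nat \<Rightarrow> nat \<Rightarrow> (nat list \<Rightarrow> int) set set" where
  "Gm d h m = generate (Gdh d h)
      {bar d h (basisvec i) | i. i \<in> tree_verts d h \<and> length i \<le> m}"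

definition theta :: "nat \<Rightarrow> nat \<Rightarrow> real" where
  "theta d m = ((real d - 1) ^ m - 1) / (real d - 2)"

end

theory Submission
  imports Defs "HOL-Library.Sublist"
begin

(* For a vertex j at depth n with parent p, let F_j be the function equal to theta(h+1-|u|) on
   the subtree below j and 0 elsewhere. Its Laplacian is theta(h+2-n) x_j - theta(h+1-n) x_p, so
   theta(h+2-n) x_j lies in Lambda + <x_i : |i| < n>, the preimage of G_{n-1}. Conversely, for a
   sibling j' of j, the function F_j - F_j' vanishes at depth < n and its Laplacian is
   theta(h+2-n) (x_j - x_j'); pairing with it therefore maps Lambda + <x_i : |i| < n> into
   theta(h+2-n) Z and sends k x_j to k theta(h+1-n). As theta(h+2-n) = 1 + (d-1) theta(h+1-n),
   the two values of theta are coprime, so k x_j lies in that preimage only if theta(h+2-n)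
   divides k. *)

lemma (in normal) FactGroup_pow_eq_one_iff:
  assumes "g \<in> carrier G"
  shows "(H #> g) [^]\<^bsub>G Mod H\<^esub> (k::nat) = \<one>\<^bsub>G Mod H\<^esub> \<longleftrightarrow> g [^] k \<in> H"
  using coset_join1[where x = "g [^] k"] coset_join2[where x = "g [^] k"] assms subgroup_axioms
  by (auto simp: FactGroup_pow)

lemma (in normal) rcos_mem_generate_FactGroup_iff:
  assumes S: "S \<subseteq> carrier G" and g: "g \<in> carrier G"
  shows "H #> g \<in> generate (G Mod H) ((\<lambda>a. H #> a) ` S) \<longleftrightarrow> g \<in> generate G (H \<union> S)"
proof -
  interpret Q: group "G Mod H"
    by (rule factorgroup_is_group)
  interpret rcos: group_hom G "G Mod H" "\<lambda>a. H #> a"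
    by unfold_locales (rule r_coset_hom_Mod)
  let ?L = "generate G (H \<union> S)"
  have HS: "H \<union> S \<subseteq> carrier G"
    using S subset by blast
  have "generate (G Mod H) ((\<lambda>a. H #> a) ` S) = generate (G Mod H) ((\<lambda>a. H #> a) ` (H \<union> S))"
  proof
    show "generate (G Mod H) ((\<lambda>a. H #> a) ` S) \<subseteq> generate (G Mod H) ((\<lambda>a. H #> a) ` (H \<union> S))"
      by (rule Q.mono_generate) auto
    have "(\<lambda>a. H #> a) ` (H \<union> S) \<subseteq> generate (G Mod H) ((\<lambda>a. H #> a) ` S)"
      using rcos_const[OF is_group] generate.one[of "G Mod H"] by (auto intro: generate.incl)
    then show "generate (G Mod H) ((\<lambda>a. H #> a) ` (H \<union> S)) \<subseteq> generate (G Mod H) ((\<lambda>a. H #> a) ` S)"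
      using S by (intro Q.generate_subgroup_incl Q.generate_is_subgroup) (auto intro: rcos.hom_closed)
  qed
  also have "\<dots> = (\<lambda>a. H #> a) ` ?L"
    by (rule rcos.generate_img[OF HS])
  finally have "H #> g \<in> generate (G Mod H) ((\<lambda>a. H #> a) ` S) \<longleftrightarrow> (\<exists>w\<in>?L. H #> g = H #> w)"
    by auto
  also have "\<dots> \<longleftrightarrow> g \<in> ?L"
  proof
    assume "\<exists>w\<in>?L. H #> g = H #> w"
    then obtain w where w: "w \<in> ?L" "g \<in> H #> w"
      using rcos_self[OF g subgroup_axioms] by auto
    then obtain h' where "h' \<in> H" "g = h' \<otimes> w"
      unfolding r_coset_def by auto
    then show "g \<in> ?L"
      using w(1) generate_is_subgroup[OF HS] by (auto intro: subgroup.m_closed generate.incl)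
  qed auto
  finally show ?thesis .
qed

lemma carrier_ZV: "carrier (ZV d h) = {f. \<forall>k. k \<notin> tree_verts d h \<longrightarrow> f k = 0}"
  by (simp add: ZV_def)

lemma ZV_simps [simp]:
  "x \<otimes>\<^bsub>ZV d h\<^esub> y = (\<lambda>k. x k + y k)"
  "\<one>\<^bsub>ZV d h\<^esub> = (\<lambda>k. 0)"
  by (simp_all add: ZV_def)

lemma comm_group_ZV: "comm_group (ZV d h)"
proof (rule comm_groupI)
  fix x assume "x \<in> carrier (ZV d h)"
  then show "\<exists>y\<in>carrier (ZV d h). y \<otimes>\<^bsub>ZV d h\<^esub> x = \<one>\<^bsub>ZV d h\<^esub>"
    by (intro bexI[of _ "\<lambda>k. - x k"]) (auto simp: carrier_ZV)
qed (auto simp: carrier_ZV add.assoc add.commute)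

interpretation ZV: comm_group "ZV d h"
  by (rule comm_group_ZV)

lemma ZV_pow: "x [^]\<^bsub>ZV d h\<^esub> (k::nat) = (\<lambda>i. int k * x i)"
  by (induction k) (auto simp: algebra_simps)

lemma ZV_inv: "x \<in> carrier (ZV d h) \<Longrightarrow> inv\<^bsub>ZV d h\<^esub> x = (\<lambda>k. - x k)"
  by (rule ZV.inv_equality) (auto simp: carrier_ZV)

lemma ZV_int_pow: "x \<in> carrier (ZV d h) \<Longrightarrow> x [^]\<^bsub>ZV d h\<^esub> (z::int) = (\<lambda>i. z * x i)"
  by (auto simp: int_pow_def2 ZV_pow ZV_inv carrier_ZV)

lemma scalar_mult_in_subgroup_ZV:
  assumes "subgroup H (ZV d h)" "v \<in> H"
  shows "(\<lambda>i. z * v i) \<in> H"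
  using ZV.subgroup_int_pow_closed[OF assms, of z] ZV_int_pow subgroup.mem_carrier[OF assms]
  by metis

lemma sum_in_subgroup_ZV:
  assumes H: "subgroup H (ZV d h)" and "finite S" "\<And>v. v \<in> S \<Longrightarrow> g v \<in> H"
  shows "(\<lambda>k. \<Sum>v\<in>S. c v * g v k) \<in> H"
  using assms(2,3)
proof (induction S rule: finite_induct)
  case empty
  then show ?case
    using subgroup.one_closed[OF H] by simp
next
  case (insert v S)
  then have "(\<lambda>k. c v * g v k) \<otimes>\<^bsub>ZV d h\<^esub> (\<lambda>k. \<Sum>v\<in>S. c v * g v k) \<in> H"
    by (intro subgroup.m_closed[OF H] scalar_mult_in_subgroup_ZV[OF H]) auto
  then show ?case
    using insert.hyps by simp
qed

lemma basisvec_in_ZV: "i \<in> tree_verts d h \<Longrightarrow> basisvec i \<in> carrier (ZV d h)"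
  by (auto simp: carrier_ZV basisvec_def)

lemma delta_row_in_ZV: "delta_row d h v \<in> carrier (ZV d h)"
  by (simp add: carrier_ZV delta_row_def)

lemma subgroup_Lam: "subgroup (Lam d h) (ZV d h)"
  unfolding Lam_def by (rule ZV.generate_is_subgroup) (auto intro: delta_row_in_ZV)

lemma Lam_normal: "Lam d h \<lhd> ZV d h"
  by (rule ZV.subgroup_imp_normal[OF subgroup_Lam])

definition child_count :: "nat \<Rightarrow> nat list \<Rightarrow> nat" where
  "child_count d w = (if w = [] then d else d - 1)"

lemma finite_tree_verts: "finite (tree_verts d h)"
proof (rule finite_subset)
  show "tree_verts d h \<subseteq> {xs. set xs \<subseteq> {..<d} \<and> length xs \<le> h}"
    by (fastforce simp: tree_verts_def in_set_conv_nth split: if_splits)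
  show "finite {xs. set xs \<subseteq> {..<d} \<and> length xs \<le> h}"
    by (rule finite_lists_length_le) simp
qed

lemma snoc_in_tree_verts_iff:
  "w @ [c] \<in> tree_verts d h \<longleftrightarrow> w \<in> tree_verts d h \<and> length w < h \<and> c < child_count d w"
  by (auto simp: tree_verts_def child_count_def nth_append less_Suc_eq split: if_splits)

lemma butlast_in_tree_verts: "v \<in> tree_verts d h \<Longrightarrow> butlast v \<in> tree_verts d h"
  by (auto simp: tree_verts_def nth_butlast)

lemma sum_adjmat:
  assumes w: "w \<in> tree_verts d h"
  shows "(\<Sum>u\<in>tree_verts d h. adjmat d h w u * f u) =
     (if w = [] then 0 else f (butlast w)) +
     (if length w < h then (\<Sum>c<child_count d w. f (w @ [c])) else 0)"
proof -
  define P where "P = (if w = [] then {} else {butlast w})"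
  define C where "C = (if length w < h then (\<lambda>c. w @ [c]) ` {..<child_count d w} else {})"
  have adj: "tree_adj d h w u \<longleftrightarrow> u \<in> P \<union> C" for u
  proof
    assume "tree_adj d h w u"
    then consider "w \<noteq> []" "u = butlast w" | "u \<in> tree_verts d h" "u \<noteq> []" "w = butlast u"
      by (auto simp: tree_adj_def)
    then show "u \<in> P \<union> C"
    proof cases
      case 2
      then have u: "u = w @ [last u]"
        by simp
      then have "length w < h" "last u < child_count d w"
        using 2(1) snoc_in_tree_verts_iff by metis+
      then show ?thesis
        using u by (auto simp: C_def)
    qed (simp add: P_def)
  next
    assume "u \<in> P \<union> C"
    then show "tree_adj d h w u"
      using w by (auto simp: P_def C_def tree_adj_def butlast_in_tree_verts snoc_in_tree_verts_iff
          snoc_in_tree_verts_iff[of "[]", simplified]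
          split: if_splits)
  qed
  have "P \<union> C \<subseteq> tree_verts d h"
    using adj by (auto simp: tree_adj_def)
  have "(\<Sum>u\<in>tree_verts d h. adjmat d h w u * f u) = (\<Sum>u\<in>tree_verts d h. if u \<in> P \<union> C then f u else 0)"
    by (intro sum.cong) (simp_all add: adjmat_def adj)
  also have "\<dots> = sum f (P \<union> C)"
    using \<open>P \<union> C \<subseteq> tree_verts d h\<close>
    by (metis Int_absorb1 finite_tree_verts sum.inter_restrict)
  also have "\<dots> = sum f P + sum f C"
    by (rule sum.union_disjoint) (auto simp: P_def C_def dest: arg_cong[where f = length])
  finally show ?thesis
    by (simp add: P_def C_def sum.reindex inj_on_def)
qed

definition laplacian :: "nat \<Rightarrow> nat \<Rightarrow> (nat list \<Rightarrow> int) \<Rightarrow> nat list \<Rightarrow> int" where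
  "laplacian d h f = (\<lambda>w. if w \<in> tree_verts d h
     then int d * f w - (\<Sum>u\<in>tree_verts d h. adjmat d h w u * f u) else 0)"

definition dot :: "nat \<Rightarrow> nat \<Rightarrow> (nat list \<Rightarrow> int) \<Rightarrow> (nat list \<Rightarrow> int) \<Rightarrow> int" where
  "dot d h f v = (\<Sum>i\<in>tree_verts d h. f i * v i)"

lemma laplacian_diff:
  "laplacian d h (\<lambda>u. f u - g u) = (\<lambda>w. laplacian d h f w - laplacian d h g w)"
  by (auto simp: laplacian_def algebra_simps sum_subtractf)

lemma dot_delta_row:
  assumes "v \<in> tree_verts d h"
  shows "dot d h f (delta_row d h v) = laplacian d h f v"
proof -
  have "dot d h f (delta_row d h v) =
      (\<Sum>i\<in>tree_verts d h. (if i = v then int d * f v else 0) - adjmat d h v i * f i)"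
    unfolding dot_def by (intro sum.cong) (auto simp: delta_row_def algebra_simps)
  then show ?thesis
    using assms by (simp add: laplacian_def sum_subtractf finite_tree_verts)
qed

lemma laplacian_eq_sum_delta_row:
  "laplacian d h f = (\<lambda>k. \<Sum>v\<in>tree_verts d h. f v * delta_row d h v k)"
proof
  fix k
  have "delta_row d h v k = delta_row d h k v" if "v \<in> tree_verts d h" for v
    using that by (auto simp: delta_row_def adjmat_def tree_adj_def)
  then show "laplacian d h f k = (\<Sum>v\<in>tree_verts d h. f v * delta_row d h v k)"
    using dot_delta_row[of k d h f]
    by (auto simp: dot_def laplacian_def delta_row_def intro: sum.cong)
qed

lemma laplacian_in_Lam: "laplacian d h f \<in> Lam d h"
  unfolding laplacian_eq_sum_delta_row
  by (intro sum_in_subgroup_ZV[OF subgroup_Lam]) (auto simp: finite_tree_verts Lam_def intro: generate.incl)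

lemma dot_basisvec: "i \<in> tree_verts d h \<Longrightarrow> dot d h f (basisvec i) = f i"
  by (simp add: dot_def basisvec_def if_distrib finite_tree_verts cong: if_cong)

lemma subgroup_dot_dvd: "subgroup {v \<in> carrier (ZV d h). m dvd dot d h f v} (ZV d h)"
  by (rule ZV.subgroupI)
    (auto simp: ZV_inv carrier_ZV dot_def algebra_simps sum.distrib sum_negf intro!: dvd_add)

definition theta_nat :: "nat \<Rightarrow> nat \<Rightarrow> nat" where
  "theta_nat d a = (\<Sum>i<a. (d - 1) ^ i)"

lemma theta_nat_0 [simp]: "theta_nat d 0 = 0"
  by (simp add: theta_nat_def)

lemma theta_nat_Suc: "theta_nat d (Suc a) = 1 + (d - 1) * theta_nat d a"
  unfolding theta_nat_def sum.lessThan_Suc_shift by (simp add: sum_distrib_left)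

lemma int_theta_nat_Suc:
  "d \<ge> 1 \<Longrightarrow> int (theta_nat d (Suc a)) = 1 + (int d - 1) * int (theta_nat d a)"
  by (simp add: theta_nat_Suc of_nat_diff)

lemma theta_nat_Suc_Suc:
  assumes "d \<ge> 1"
  shows "int d * int (theta_nat d (Suc a)) - (int d - 1) * int (theta_nat d a)
    = int (theta_nat d (Suc (Suc a)))"
  using assms by (simp add: int_theta_nat_Suc[of d "Suc a"] int_theta_nat_Suc[of d a] algebra_simps)

lemma coprime_theta_nat_Suc: "coprime (theta_nat d (Suc a)) (theta_nat d a)"
proof -
  have "gcd (theta_nat d a) ((d - 1) * theta_nat d a + 1) = 1"
    by (simp only: gcd_add_mult) simp
  then show ?thesis
    by (simp add: theta_nat_Suc coprime_iff_gcd_eq_1 gcd.commute add.commute)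
qed

lemma theta_eq_theta_nat:
  assumes "d \<ge> 3"
  shows "theta d a = real (theta_nat d a)"
proof -
  have "real (theta_nat d a) = (\<Sum>i<a. (real d - 1) ^ i)"
    using assms by (simp add: theta_nat_def of_nat_diff)
  also have "\<dots> = ((real d - 1) ^ a - 1) / (real d - 2)"
    using assms by (simp add: sum_gp_strict field_simps)
  finally show ?thesis
    by (simp add: theta_def)
qed

definition subtree_fun :: "nat \<Rightarrow> nat \<Rightarrow> nat list \<Rightarrow> nat list \<Rightarrow> int" where
  "subtree_fun d h j u = (if prefix j u then int (theta_nat d (Suc (h - length u))) else 0)"

lemma last_less_child_count:
  "j \<in> tree_verts d h \<Longrightarrow> j \<noteq> [] \<Longrightarrow> last j < child_count d (butlast j)"
  using snoc_in_tree_verts_iff[of "butlast j" "last j" d h] by simp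

lemma subtree_fun_butlast:
  assumes "w \<noteq> []" "length w \<le> h"
  shows "subtree_fun d h j (butlast w) =
    (if prefix j w \<and> w \<noteq> j then int (theta_nat d (Suc (Suc (h - length w)))) else 0)"
proof -
  have "prefix j w \<longleftrightarrow> j = w \<or> prefix j (butlast w)"
    using prefix_snoc[of j "butlast w" "last w"] assms(1) by simp
  moreover have "\<not> prefix w (butlast w)"
    using assms(1) prefix_length_le[of w "butlast w"] by (cases w) auto
  ultimately have "prefix j w \<and> w \<noteq> j \<longleftrightarrow> prefix j (butlast w)"
    by auto
  moreover have "Suc (h - length (butlast w)) = Suc (Suc (h - length w))"
    using assms by (cases w rule: rev_cases) auto
  ultimately show ?thesis
    by (simp add: subtree_fun_def)
qed

lemma sum_subtree_fun_children:
  assumes j: "j \<in> tree_verts d h" "j \<noteq> []" and w: "length w < h"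
  shows "(\<Sum>c<child_count d w. subtree_fun d h j (w @ [c])) =
    (if prefix j w then int (child_count d w) * int (theta_nat d (h - length w))
     else if w = butlast j then int (theta_nat d (h - length w)) else 0)"
proof -
  have child: "subtree_fun d h j (w @ [c]) =
      (if j = w @ [c] \<or> prefix j w then int (theta_nat d (h - length w)) else 0)" for c
    using w by (simp add: subtree_fun_def Suc_diff_Suc)
  show ?thesis
  proof (cases "prefix j w")
    case False
    have "j = w @ [c] \<longleftrightarrow> w = butlast j \<and> c = last j" for c
      using j(2) by (auto simp: snoc_eq_iff_butlast)
    then show ?thesis
      using False last_less_child_count[OF j] by (simp add: child if_distrib[of int] sum.delta)
  qed (simp add: child)
qed

lemma laplacian_subtree_fun:
  assumes j: "j \<in> tree_verts d h" "j \<noteq> []"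
  shows "laplacian d h (subtree_fun d h j) =
    (\<lambda>w. int (theta_nat d (Suc (Suc (h - length j)))) * basisvec j w
         - int (theta_nat d (Suc (h - length j))) * basisvec (butlast j) w)"
proof
  fix w
  let ?F = "subtree_fun d h j"
  have "d \<ge> 1" and jh: "length j \<le> h"
    using j by (auto simp: tree_verts_def neq_Nil_conv dest!: spec[of _ 0])
  show "laplacian d h ?F w = int (theta_nat d (Suc (Suc (h - length j)))) * basisvec j w
         - int (theta_nat d (Suc (h - length j))) * basisvec (butlast j) w"
  proof (cases "w \<in> tree_verts d h")
    case False
    then have "w \<noteq> j" "w \<noteq> butlast j"
      using j butlast_in_tree_verts by auto
    with False show ?thesis
      by (simp add: laplacian_def basisvec_def)
  next
    case w: True
    then have wh: "length w \<le> h"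
      by (simp add: tree_verts_def)
    have lap: "laplacian d h ?F w = int d * ?F w - (if w = [] then 0 else ?F (butlast w))
        - (if length w < h then (\<Sum>c<child_count d w. ?F (w @ [c])) else 0)"
      using w by (simp add: laplacian_def sum_adjmat)
    show ?thesis
    proof (cases "prefix j w")
      case True
      define a where "a = h - length w"
      have "0 < length j"
        using j(2) by simp
      then have "0 < length w" "length (butlast j) < length w"
        unfolding length_butlast using prefix_length_le[OF True] by linarith+
      then have "w \<noteq> []" "w \<noteq> butlast j"
        by auto
      have "(if length w < h then (\<Sum>c<child_count d w. ?F (w @ [c])) else 0)
          = (int d - 1) * int (theta_nat d a)"
        using sum_subtree_fun_children[OF j, of w] True \<open>w \<noteq> []\<close> \<open>d \<ge> 1\<close> wh
        by (auto simp: child_count_def of_nat_diff a_def)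
      moreover have "?F (butlast w) = (if w = j then 0 else int (theta_nat d (Suc (Suc a))))"
        using subtree_fun_butlast[OF \<open>w \<noteq> []\<close> wh] True by (simp add: a_def)
      moreover have "?F w = int (theta_nat d (Suc a))"
        using True by (simp add: subtree_fun_def a_def)
      ultimately have "laplacian d h ?F w = int d * int (theta_nat d (Suc a))
          - (int d - 1) * int (theta_nat d a) - (if w = j then 0 else int (theta_nat d (Suc (Suc a))))"
        using lap \<open>w \<noteq> []\<close> by simp
      then show ?thesis
        using \<open>w \<noteq> butlast j\<close> theta_nat_Suc_Suc[OF \<open>d \<ge> 1\<close>, of a]
        by (simp add: basisvec_def a_def)
    next
      case False
      then have "w \<noteq> j"
        by auto
      have "w = butlast j \<Longrightarrow> length w < h \<and> h - length w = Suc (h - length j)"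
        using j(2) jh by (cases j rule: rev_cases) auto
      then have "(if length w < h then (\<Sum>c<child_count d w. ?F (w @ [c])) else 0)
          = (if w = butlast j then int (theta_nat d (Suc (h - length j))) else 0)"
        using sum_subtree_fun_children[OF j, of w] False by auto
      moreover have "?F w = 0" "(if w = [] then 0 else ?F (butlast w)) = 0"
        using False subtree_fun_butlast[OF _ wh] by (auto simp: subtree_fun_def)
      ultimately show ?thesis
        using lap \<open>w \<noteq> j\<close> by (simp add: basisvec_def)
    qed
  qed
qed

definition lower_lattice :: "nat \<Rightarrow> nat \<Rightarrow> nat \<Rightarrow> (nat list \<Rightarrow> int) set" where
  "lower_lattice d h m =
     generate (ZV d h) (Lam d h \<union> basisvec ` {i \<in> tree_verts d h. length i \<le> m})"

lemma subgroup_lower_lattice: "subgroup (lower_lattice d h m) (ZV d h)"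
  unfolding lower_lattice_def
  using subgroup.subset[OF subgroup_Lam]
  by (intro ZV.generate_is_subgroup) (auto intro: basisvec_in_ZV)

lemma dvd_dot_of_mem_lower_lattice:
  assumes "\<And>v. v \<in> tree_verts d h \<Longrightarrow> N dvd laplacian d h f v"
    and "\<And>i. i \<in> tree_verts d h \<Longrightarrow> length i \<le> m \<Longrightarrow> f i = 0"
    and "w \<in> lower_lattice d h m"
  shows "N dvd dot d h f w"
proof -
  let ?K = "{v \<in> carrier (ZV d h). N dvd dot d h f v}"
  have "Lam d h \<subseteq> ?K"
    unfolding Lam_def using assms(1)
    by (intro ZV.generate_subgroup_incl subgroup_dot_dvd) (auto simp: dot_delta_row intro: delta_row_in_ZV)
  moreover have "basisvec ` {i \<in> tree_verts d h. length i \<le> m} \<subseteq> ?K"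
    using assms(2) by (auto simp: dot_basisvec intro: basisvec_in_ZV)
  ultimately have "lower_lattice d h m \<subseteq> ?K"
    unfolding lower_lattice_def by (intro ZV.generate_subgroup_incl subgroup_dot_dvd) auto
  then show ?thesis
    using assms(3) by auto
qed

lemma obtain_sibling:
  assumes "d \<ge> 3" "j \<in> tree_verts d h" "j \<noteq> []"
  obtains j' where "j' \<in> tree_verts d h" "j' \<noteq> j" "length j' = length j" "butlast j' = butlast j"
proof
  let ?c = "if last j = 0 then 1 else 0 :: nat"
  have "butlast j @ [last j] \<in> tree_verts d h"
    using assms(2,3) by simp
  then show "butlast j @ [?c] \<in> tree_verts d h"
    using assms(1) by (auto simp: snoc_in_tree_verts_iff child_count_def)
  show "butlast j @ [?c] \<noteq> j"
    using append_butlast_last_id[OF assms(3)] by (metis last_snoc zero_neq_one)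
  show "length (butlast j @ [?c]) = length j" "butlast (butlast j @ [?c]) = butlast j"
    using assms(3) by auto
qed

lemma multiple_basisvec_in_lower_lattice:
  assumes "j \<in> tree_verts d h" "j \<noteq> []"
  shows "(\<lambda>i. int (theta_nat d (Suc (Suc (h - length j)))) * basisvec j i)
    \<in> lower_lattice d h (length j - 1)"
proof -
  let ?T = "int (theta_nat d (Suc (h - length j)))"
  let ?L = "lower_lattice d h (length j - 1)"
  have "laplacian d h (subtree_fun d h j) \<in> ?L"
    using laplacian_in_Lam unfolding lower_lattice_def by (blast intro: generate.incl)
  moreover have "basisvec (butlast j) \<in> ?L"
    using assms butlast_in_tree_verts unfolding lower_lattice_def by (auto intro: generate.incl)
  then have "(\<lambda>i. ?T * basisvec (butlast j) i) \<in> ?L"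
    by (rule scalar_mult_in_subgroup_ZV[OF subgroup_lower_lattice])
  ultimately have "laplacian d h (subtree_fun d h j) \<otimes>\<^bsub>ZV d h\<^esub> (\<lambda>i. ?T * basisvec (butlast j) i) \<in> ?L"
    by (rule subgroup.m_closed[OF subgroup_lower_lattice])
  then show ?thesis
    by (simp add: laplacian_subtree_fun[OF assms])
qed

lemma dvd_of_multiple_basisvec_in_lower_lattice:
  assumes d: "d \<ge> 3" and j: "j \<in> tree_verts d h" "j \<noteq> []"
    and mem: "(\<lambda>i. int k * basisvec j i) \<in> lower_lattice d h (length j - 1)"
  shows "theta_nat d (Suc (Suc (h - length j))) dvd k"
proof -
  define N where "N = theta_nat d (Suc (Suc (h - length j)))"
  define T where "T = theta_nat d (Suc (h - length j))"
  obtain j' where j': "j' \<in> tree_verts d h" "j' \<noteq> j" "length j' = length j" "butlast j' = butlast j"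
    using obtain_sibling[OF d j] .
  then have "j' \<noteq> []"
    using j(2) by auto
  define f where "f = (\<lambda>u. subtree_fun d h j u - subtree_fun d h j' u)"
  have "laplacian d h f = (\<lambda>w. int N * (basisvec j w - basisvec j' w))"
    unfolding f_def laplacian_diff laplacian_subtree_fun[OF j] laplacian_subtree_fun[OF j'(1) \<open>j' \<noteq> []\<close>]
    using j' by (simp add: N_def algebra_simps)
  moreover have "f i = 0" if "length i \<le> length j - 1" for i
  proof -
    have "length i < length j"
      using that j(2) by (cases j) auto
    then have "\<not> prefix j i" "\<not> prefix j' i"
      using j'(3) by (auto dest: prefix_length_le)
    then show ?thesis
      by (simp add: f_def subtree_fun_def)
  qed
  ultimately have "int N dvd dot d h f (\<lambda>i. int k * basisvec j i)"
    using mem by (intro dvd_dot_of_mem_lower_lattice) auto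
  moreover have "dot d h f (\<lambda>i. int k * basisvec j i) = int k * f j"
    using dot_basisvec[OF j(1), of f] by (simp add: dot_def mult.left_commute flip: sum_distrib_left)
  moreover have "f j = int T"
  proof -
    have "\<not> prefix j' j"
      using j'(2,3) by (auto simp: prefix_def)
    then show ?thesis
      by (simp add: f_def subtree_fun_def T_def)
  qed
  ultimately have "N dvd k * T"
    by (simp flip: of_nat_mult)
  moreover have "coprime N T"
    unfolding N_def T_def by (rule coprime_theta_nat_Suc)
  ultimately show ?thesis
    unfolding N_def by (simp add: coprime_dvd_mult_left_iff)
qed

lemma multiple_basisvec_in_lower_lattice_iff:
  assumes "d \<ge> 3" "j \<in> tree_verts d h" "j \<noteq> []"
  shows "(\<lambda>i. int k * basisvec j i) \<in> lower_lattice d h (length j - 1)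
    \<longleftrightarrow> theta_nat d (Suc (Suc (h - length j))) dvd k"
proof
  assume "theta_nat d (Suc (Suc (h - length j))) dvd k"
  then obtain q where "k = theta_nat d (Suc (Suc (h - length j))) * q" ..
  then show "(\<lambda>i. int k * basisvec j i) \<in> lower_lattice d h (length j - 1)"
    using scalar_mult_in_subgroup_ZV[OF subgroup_lower_lattice
        multiple_basisvec_in_lower_lattice[OF assms(2,3)], of "int q"]
    by (simp add: algebra_simps)
qed (rule dvd_of_multiple_basisvec_in_lower_lattice[OF assms])

lemma Gdh_comm_group: "comm_group (Gdh d h)"
  unfolding Gdh_def by (rule ZV.abelian_FactGroup[OF subgroup_Lam])

interpretation Gdh: comm_group "Gdh d h"
  by (rule Gdh_comm_group)

lemma bar_in_Gdh: "v \<in> carrier (ZV d h) \<Longrightarrow> bar d h v \<in> carrier (Gdh d h)"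
  by (auto simp: bar_def Gdh_def carrier_FactGroup)

lemma Gm_normal: "Gm d h m \<lhd> Gdh d h"
  unfolding Gm_def
  by (rule Gdh.subgroup_imp_normal, rule Gdh.generate_is_subgroup)
    (auto intro: bar_in_Gdh basisvec_in_ZV)

lemma bar_pow: "v \<in> carrier (ZV d h) \<Longrightarrow> bar d h v [^]\<^bsub>Gdh d h\<^esub> (k::nat) = bar d h (\<lambda>i. int k * v i)"
  unfolding bar_def Gdh_def by (simp add: normal.FactGroup_pow[OF Lam_normal] ZV_pow)

lemma bar_mem_Gm_iff:
  assumes "v \<in> carrier (ZV d h)"
  shows "bar d h v \<in> Gm d h m \<longleftrightarrow> v \<in> lower_lattice d h m"
proof -
  let ?B = "basisvec ` {i \<in> tree_verts d h. length i \<le> m}"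
  have "?B \<subseteq> carrier (ZV d h)"
    by (auto intro: basisvec_in_ZV)
  moreover have "{bar d h (basisvec i) | i. i \<in> tree_verts d h \<and> length i \<le> m}
      = (\<lambda>a. Lam d h #>\<^bsub>ZV d h\<^esub> a) ` ?B"
    by (auto simp: bar_def)
  ultimately show ?thesis
    using normal.rcos_mem_generate_FactGroup_iff[OF Lam_normal _ assms]
    by (simp add: Gm_def Gdh_def bar_def lower_lattice_def)
qed

lemma Gm_coset_basisvec_pow_eq_one_iff:
  assumes "d \<ge> 3" "j \<in> tree_verts d h" "j \<noteq> []"
  defines "H \<equiv> Gm d h (length j - 1)"
  shows "(H #>\<^bsub>Gdh d h\<^esub> bar d h (basisvec j)) [^]\<^bsub>Gdh d h Mod H\<^esub> k = \<one>\<^bsub>Gdh d h Mod H\<^esub>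
    \<longleftrightarrow> theta_nat d (Suc (Suc (h - length j))) dvd k"
proof -
  interpret H: normal H "Gdh d h"
    unfolding H_def by (rule Gm_normal)
  have x: "basisvec j \<in> carrier (ZV d h)" "(\<lambda>i. int k * basisvec j i) \<in> carrier (ZV d h)"
    using assms(2) by (auto simp: carrier_ZV basisvec_def)
  have "(H #>\<^bsub>Gdh d h\<^esub> bar d h (basisvec j)) [^]\<^bsub>Gdh d h Mod H\<^esub> k = \<one>\<^bsub>Gdh d h Mod H\<^esub>
      \<longleftrightarrow> bar d h (\<lambda>i. int k * basisvec j i) \<in> H"
    using H.FactGroup_pow_eq_one_iff[OF bar_in_Gdh[OF x(1)]] by (simp add: bar_pow[OF x(1)])
  also have "\<dots> \<longleftrightarrow> (\<lambda>i. int k * basisvec j i) \<in> lower_lattice d h (length j - 1)"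
    unfolding H_def by (rule bar_mem_Gm_iff[OF x(2)])
  also have "\<dots> \<longleftrightarrow> theta_nat d (Suc (Suc (h - length j))) dvd k"
    by (rule multiple_basisvec_in_lower_lattice_iff[OF assms(1-3)])
  finally show ?thesis .
qed

theorem proposition8p10:
  fixes d h n :: nat and j :: "nat list"
  assumes "d \<ge> 3" and "h \<ge> 1" and "1 \<le> n" and "n \<le> h"
    and "j \<in> tree_verts d h" and "length j = n"
  shows "real (group.ord (Gdh d h Mod Gm d h (n - 1))
                (Gm d h (n - 1) #>\<^bsub>Gdh d h\<^esub> bar d h (basisvec j)))
         = theta d (h + 2 - n)"
proof -
  let ?H = "Gm d h (n - 1)"
  interpret H: normal ?H "Gdh d h"
    by (rule Gm_normal)
  have j: "j \<noteq> []" "h + 2 - n = Suc (Suc (h - length j))"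
    using assms by auto
  have y: "?H #>\<^bsub>Gdh d h\<^esub> bar d h (basisvec j) \<in> carrier (Gdh d h Mod ?H)"
    using bar_in_Gdh basisvec_in_ZV[OF assms(5)]
    by (simp add: carrier_FactGroup Gdh.rcosetsI H.subset)
  have "group.ord (Gdh d h Mod ?H) (?H #>\<^bsub>Gdh d h\<^esub> bar d h (basisvec j))
      = theta_nat d (h + 2 - n)"
    unfolding group.ord_unique[OF H.factorgroup_is_group y]
    using Gm_coset_basisvec_pow_eq_one_iff[OF assms(1,5) j(1)] assms(6) j(2) by simp
  then show ?thesis
    by (simp add: theta_eq_theta_nat[OF assms(1)])
qed

end
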